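(* Let $T\ge1$ and let $p$ be a $T$-period random joint choice rule on a finite set $X$. Then $p$ is consistent with state independent consumption dependent random utility if and only if it satisfies marginality, complete monotonicity, and choice set independence.
   Context: $\mathcal{X}$ is the set of nonempty subsets of $X$, $\mathcal{L}(X)$ the linear orders, $N(x,A)=\{\succ: x\succ y\ \forall y\in A\setminus\{x\}\}$. Notation: $\mathbf{x}^\tau=(x_1,\dots,x_\tau)$, $\mathbf{A}^\tau=(A_1,\dots,A_\tau)\in\mathcal{X}^\tau$, and $\mathbf{x}^\tau\in\mathbf{A}^\tau$ means $x_i\in A_i$ for all $i$. A $T$-period random joint choice rule assigns to each $\mathbf{A}^T\in\mathcal{X}^T$ and $\mathbf{x}^T\in\mathbf{A}^T$ a number $p(\mathbf{x}^T,\mathbf{A}^T)\ge0$ with $\sum_{\mathbf{x}^T\in\mathbf{A}^T}p(\mathbf{x}^T,\mathbf{A}^T)=1$. For $\tau<T$ define recursively $p(\mathbf{x}^\tau,\mathbf{A}^\tau)=\sum_{y\in X}p(\mathbf{x}^\tau,y,\mathbf{A}^\tau,X)$. Marginality: for all $\tau\in\{1,\dots,T-1\}$, $\mathbf{A}^\tau$, $\mathbf{x}^\tau\in\mathbf{A}^\tau$, $B,C\in\mathcal{X}$: $\sum_{y\in B}p(\mathbf{x}^\tau,y,\mathbf{A}^\tau,B)=\sum_{y\in C}p(\mathbf{x}^\tau,y,\mathbf{A}^\tau,C)$. The Möbius inverse $q$ is defined by $p(\mathbf{x}^T,\mathbf{A}^T)=\sum_{A_1\subseteq A_1'\subseteq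 X}\cdots\sum_{A_T\subseteq A_T'\subseteq X}q(\mathbf{x}^T,A_1',\dots,A_T')$; complete monotonicity means $q\ge0$ everywhere. Choice set independence: for each $\tau\in\{1,\dots,T-1\}$, each $B\in\mathcal{X}$ and $y\in B$, and each $\mathbf{A}^\tau,\mathbf{A}'^\tau$ with $\mathbf{x}^\tau\in\mathbf{A}^\tau\cap\mathbf{A}'^\tau$, $p(\mathbf{x}^\tau,\mathbf{A}^\tau)>0$, $p(\mathbf{x}^\tau,\mathbf{A}'^\tau)>0$: $\frac{p(\mathbf{x}^\tau,y,\mathbf{A}^\tau,B)}{p(\mathbf{x}^\tau,\mathbf{A}^\tau)}=\frac{p(\mathbf{x}^\tau,y,\mathbf{A}'^\tau,B)}{p(\mathbf{x}^\tau,\mathbf{A}'^\tau)}$. A state independent transition function of degree $n$ is a map $t^n:X^n\to\Delta(\mathcal{L}(X))$, with $t^n_{\succ'}(\cdot)$ the probability of $\succ'$. $p$ is consistent with state independent consumption dependent random utility if there exist $\nu\in\Delta(\mathcal{L}(X))$ and state independent transition functions $t^1,\dots,t^{T-1}$ ($t^n$ of degree $n$) with $p(\mathbf{x}^T,\mathbf{A}^T)=\sum_{\succ_1\in N(x_1,A_1)}\cdots\sum_{\succ_T\in N(x_T,A_T)}\nu(\succ_1)\prod_{\tau=2}^T t^{\tau-1}_{\succ_\tau}(\mathbf{x}^{\tau-1})$ for all $\mathbf{A}^T$, $\mathbf{x}^T\in\mathbf{A}^T$. *)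

theory Defs
  imports Complex_Main
begin

(* The ground set X is the (finite, nonempty) universe of the type 'a::finite.
   Periods are 0-indexed list positions; a vector x^tau is a list of length tau. *)

definition menus :: "nat \<Rightarrow> 'a set list set" where
  "menus n = {As. length As = n \<and> (\<forall>A\<in>set As. A \<noteq> {})}"

definition in_menus :: "'a list \<Rightarrow> 'a set list \<Rightarrow> bool" where
  "in_menus xs As \<longleftrightarrow> list_all2 (\<in>) xs As"

definition sels :: "'a set list \<Rightarrow> 'a list set" where
  "sels As = {xs. in_menus xs As}"

definition rjcr :: "nat \<Rightarrow> ('a::finite list \<Rightarrow> 'a set list \<Rightarrow> real) \<Rightarrow> bool" where
  "rjcr T p \<longleftrightarrow> (\<forall>As\<in>menus T. (\<forall>xs\<in>sels As. p xs As \<ge> 0) \<and> (\<Sum>xs\<in>sels As. p xs As) = 1)"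

(* marg k p xs As = p(x^tau, A^tau) with tau = T - k, defined recursively:
   p(x^tau,A^tau) = sum_{y in X} p(x^tau, y, A^tau, X) *)
fun marg :: "nat \<Rightarrow> ('a::finite list \<Rightarrow> 'a set list \<Rightarrow> real) \<Rightarrow> 'a list \<Rightarrow> 'a set list \<Rightarrow> real" where
  "marg 0 p xs As = p xs As"
| "marg (Suc k) p xs As = (\<Sum>y\<in>UNIV. marg k p (xs @ [y]) (As @ [UNIV]))"

definition pp :: "nat \<Rightarrow> ('a::finite list \<Rightarrow> 'a set list \<Rightarrow> real) \<Rightarrow> 'a list \<Rightarrow> 'a set list \<Rightarrow> real" where
  "pp T p xs As = marg (T - length xs) p xs As"

definition marginality :: "nat \<Rightarrow> ('a::finite list \<Rightarrow> 'a set list \<Rightarrow> real) \<Rightarrow> bool" where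
  "marginality T p \<longleftrightarrow>
     (\<forall>\<tau>\<in>{1..T-1}. \<forall>As\<in>menus \<tau>. \<forall>xs\<in>sels As. \<forall>B C. B \<noteq> {} \<longrightarrow> C \<noteq> {} \<longrightarrow>
        (\<Sum>y\<in>B. pp T p (xs @ [y]) (As @ [B])) = (\<Sum>y\<in>C. pp T p (xs @ [y]) (As @ [C])))"

(* Moebius inverse q of p, i.e. the unique q with
   p(x^T, A^T) = sum_{A_1 \<subseteq> A_1'} ... sum_{A_T \<subseteq> A_T'} q(x^T, A_1', ..., A_T'),
   given by the Moebius inversion formula *)
definition supsets :: "'a set list \<Rightarrow> 'a set list set" where
  "supsets Bs = {As. length As = length Bs \<and> (\<forall>i<length Bs. Bs ! i \<subseteq> As ! i)}"

definition mobius :: "('a::finite list \<Rightarrow> 'a set list \<Rightarrow> real) \<Rightarrow> 'a list \<Rightarrow> 'a set list \<Rightarrow> real" where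
  "mobius p xs Bs = (\<Sum>As\<in>supsets Bs.
      (-1) ^ (\<Sum>i<length Bs. card (As ! i - Bs ! i)) * p xs As)"

definition complete_monotonicity :: "nat \<Rightarrow> ('a::finite list \<Rightarrow> 'a set list \<Rightarrow> real) \<Rightarrow> bool" where
  "complete_monotonicity T p \<longleftrightarrow> (\<forall>Bs\<in>menus T. \<forall>xs\<in>sels Bs. mobius p xs Bs \<ge> 0)"

definition choice_set_independence :: "nat \<Rightarrow> ('a::finite list \<Rightarrow> 'a set list \<Rightarrow> real) \<Rightarrow> bool" where
  "choice_set_independence T p \<longleftrightarrow>
     (\<forall>\<tau>\<in>{1..T-1}. \<forall>B y As As' xs. B \<noteq> {} \<longrightarrow> y \<in> B \<longrightarrow>
        As \<in> menus \<tau> \<longrightarrow> As' \<in> menus \<tau> \<longrightarrow> in_menus xs As \<longrightarrow> in_menus xs As' \<longrightarrow>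
        pp T p xs As > 0 \<longrightarrow> pp T p xs As' > 0 \<longrightarrow>
        pp T p (xs @ [y]) (As @ [B]) / pp T p xs As = pp T p (xs @ [y]) (As' @ [B]) / pp T p xs As')"

definition lorders :: "'a rel set" where
  "lorders = {r. strict_linear_order r}"

definition Nset :: "'a \<Rightarrow> 'a set \<Rightarrow> 'a rel set" where
  "Nset x A = {r\<in>lorders. \<forall>y\<in>A - {x}. (x, y) \<in> r}"

definition is_dist :: "('a rel \<Rightarrow> real) \<Rightarrow> bool" where
  "is_dist d \<longleftrightarrow> (\<forall>r\<in>lorders. d r \<ge> 0) \<and> (\<Sum>r\<in>lorders. d r) = 1"

definition sicdru :: "nat \<Rightarrow> ('a::finite list \<Rightarrow> 'a set list \<Rightarrow> real) \<Rightarrow> bool" where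
  "sicdru T p \<longleftrightarrow> (\<exists>(\<nu>::'a rel \<Rightarrow> real) (t::nat \<Rightarrow> 'a list \<Rightarrow> 'a rel \<Rightarrow> real).
     is_dist \<nu> \<and>
     (\<forall>n\<in>{1..T-1}. \<forall>xs. length xs = n \<longrightarrow> is_dist (t n xs)) \<and>
     (\<forall>As\<in>menus T. \<forall>xs\<in>sels As.
        p xs As = (\<Sum>rs\<in>{rs. length rs = T \<and> (\<forall>i<T. rs ! i \<in> Nset (xs ! i) (As ! i))}.
                     \<nu> (rs ! 0) * (\<Prod>i\<in>{1..<T}. t i (take i xs) (rs ! i)))))"

end

theory Submission
  imports Defs "HOL-Combinatorics.Multiset_Permutations"
begin

(* Necessity: under consumption dependent random utility the probability of a choice sequence
   is a product over periods of one-period random utility probabilities, the distribution of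
   each period depending only on past consumption.  Summing out later periods keeps this product
   form, which gives marginality and choice set independence; and the Moebius inverse of the
   product is the product of one-period Moebius inverses, each of which is the probability that
   a given set consists of x and the alternatives ranked below x, hence nonnegative.

   Sufficiency: the first-period marginal, and after any history of positive probability the
   conditional choice rule of the next period, sum to one by marginality and have nonnegative
   Moebius inverses by complete monotonicity.  Falmagne's theorem turns each of them into a
   distribution over linear orders, and by choice set independence the conditional rule does not
   depend on the menus of the history, so p factors as required.  Falmagne's theorem is proved by
   ranking the alternatives from the top: if A is the set of alternatives not yet ranked, z is
   ranked next with probability q(z, A) / (SUM x:A. q(x, A)), where q is the Moebius inverse.
   The identity (SUM y:-A. q(y, A + {y})) = (SUM x:A. q(x, A)) makes this a probability
   distribution, and it reproduces the choice probabilities. *)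

section \<open>Alternating sums and Moebius inversion on subsets\<close>

lemma sum_interval_neg_one_power_card:
  assumes "finite C" "A \<subseteq> C"
  shows "(\<Sum>B | A \<subseteq> B \<and> B \<subseteq> C. (-1::'b::comm_ring_1) ^ card B) = (if A = C then (-1) ^ card A else 0)"
proof (cases "A = C")
  case True
  then have "{B. A \<subseteq> B \<and> B \<subseteq> C} = {A}" by auto
  with True show ?thesis by simp
next
  case False
  with assms have "A \<subset> C" by blast
  have "{B. A \<subseteq> B \<and> B \<subseteq> C} \<subseteq> Pow C"
    by blast
  with assms(1) have "finite {B. A \<subseteq> B \<and> B \<subseteq> C}"
    by (metis finite_Pow_iff finite_subset)
  with card_subsupersets_even_odd[OF assms(1) \<open>A \<subset> C\<close>] False show ?thesis
    by (subst sum_alternating_cancels) (simp_all add: conj_commute conj_left_commute)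
qed

lemma sum_interval_neg_one_power_card_diff_above:
  assumes "finite C" "A \<subseteq> C"
  shows "(\<Sum>B | A \<subseteq> B \<and> B \<subseteq> C. (-1::'b::comm_ring_1) ^ card (B - A)) = (if A = C then 1 else 0)"
proof -
  have "(-1::'b) ^ card (B - A) = (-1) ^ card A * (-1) ^ card B" if "A \<subseteq> B" "B \<subseteq> C" for B
  proof -
    have "finite B" using assms(1) that(2) by (rule finite_subset[rotated])
    with that have "card (B - A) = card B - card A" "card A \<le> card B"
      by (simp_all add: card_Diff_subset finite_subset card_mono)
    then show ?thesis
      by (simp add: neg_one_power_add_eq_neg_one_power_diff[symmetric] power_add mult_ac)
  qed
  then have "(\<Sum>B | A \<subseteq> B \<and> B \<subseteq> C. (-1::'b) ^ card (B - A))
      = (-1) ^ card A * (\<Sum>B | A \<subseteq> B \<and> B \<subseteq> C. (-1) ^ card B)"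
    by (simp add: sum_distrib_left)
  also have "\<dots> = (if A = C then 1 else 0)"
    using assms by (simp add: sum_interval_neg_one_power_card flip: power_add)
  finally show ?thesis .
qed

lemma sum_interval_neg_one_power_card_diff_below:
  assumes "finite C" "A \<subseteq> C"
  shows "(\<Sum>B | A \<subseteq> B \<and> B \<subseteq> C. (-1::'b::comm_ring_1) ^ card (C - B)) = (if A = C then 1 else 0)"
proof -
  have "(-1::'b) ^ card (C - B) = (-1) ^ card C * (-1) ^ card B" if "A \<subseteq> B" "B \<subseteq> C" for B
  proof -
    have "finite B" using assms(1) that(2) by (rule finite_subset[rotated])
    with that assms have "card (C - B) = card C - card B" "card B \<le> card C"
      by (simp_all add: card_Diff_subset card_mono)
    then show ?thesis
      by (simp add: neg_one_power_add_eq_neg_one_power_diff[symmetric] power_add)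
  qed
  then have "(\<Sum>B | A \<subseteq> B \<and> B \<subseteq> C. (-1::'b) ^ card (C - B))
      = (-1) ^ card C * (\<Sum>B | A \<subseteq> B \<and> B \<subseteq> C. (-1) ^ card B)"
    by (simp add: sum_distrib_left)
  also have "\<dots> = (if A = C then 1 else 0)"
    using assms by (simp add: sum_interval_neg_one_power_card flip: power_add)
  finally show ?thesis .
qed

definition mobius_set :: "('a::finite set \<Rightarrow> real) \<Rightarrow> 'a set \<Rightarrow> real" where
  "mobius_set g B = (\<Sum>A | B \<subseteq> A. (-1) ^ card (A - B) * g A)"

lemma mobius_set_inversion: "g A = (\<Sum>B | A \<subseteq> B. mobius_set g B)"
proof -
  have "(\<Sum>B | A \<subseteq> B. mobius_set g B)
      = (\<Sum>B | A \<subseteq> B. \<Sum>C\<in>{C\<in>{C. A \<subseteq> C}. B \<subseteq> C}. (-1) ^ card (C - B) * g C)"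
    unfolding mobius_set_def by (intro sum.cong refl arg_cong2[where f = sum]) auto
  also have "\<dots> = (\<Sum>C | A \<subseteq> C. \<Sum>B\<in>{B\<in>{B. A \<subseteq> B}. B \<subseteq> C}. (-1) ^ card (C - B) * g C)"
    by (rule sum.swap_restrict) simp_all
  also have "\<dots> = (\<Sum>C | A \<subseteq> C. if C = A then g C else 0)"
    by (intro sum.cong refl)
       (simp add: sum_distrib_right[symmetric] sum_interval_neg_one_power_card_diff_below)
  also have "\<dots> = g A"
    by (simp add: sum.delta')
  finally show ?thesis ..
qed

lemma mobius_set_sum: "mobius_set (\<lambda>A. \<Sum>r\<in>R. g r A) B = (\<Sum>r\<in>R. mobius_set (g r) B)"
  unfolding mobius_set_def sum_distrib_left by (rule sum.swap)

lemma mobius_set_divide: "mobius_set (\<lambda>B. g B / c) B0 = mobius_set g B0 / c"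
  unfolding mobius_set_def by (simp add: sum_divide_distrib)

lemma mobius_set_indicator_subset:
  "mobius_set (\<lambda>A. if A \<subseteq> S then c else 0) B = (if B = S then c else 0)"
proof -
  have "{A. B \<subseteq> A \<and> A \<subseteq> S} = {A\<in>{A. B \<subseteq> A}. A \<subseteq> S}"
    by blast
  then have "mobius_set (\<lambda>A. if A \<subseteq> S then c else 0) B
      = (\<Sum>A | B \<subseteq> A \<and> A \<subseteq> S. (-1) ^ card (A - B)) * c"
    unfolding mobius_set_def sum_distrib_right
    by (simp only: sum.inter_filter[OF finite]) (auto intro: sum.cong)
  also have "\<dots> = (if B = S then c else 0)"
  proof (cases "B \<subseteq> S")
    case True
    then show ?thesis
      by (simp add: sum_interval_neg_one_power_card_diff_above eq_commute)
  next
    case False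
    then have empty: "{A. B \<subseteq> A \<and> A \<subseteq> S} = {}" and "B \<noteq> S"
      by blast+
    then show ?thesis
      unfolding empty by simp
  qed
  finally show ?thesis .
qed

section \<open>Random utility on a finite set\<close>

definition rum :: "('a rel \<Rightarrow> real) \<Rightarrow> 'a \<Rightarrow> 'a set \<Rightarrow> real" where
  "rum \<nu> x A = (\<Sum>r\<in>Nset x A. \<nu> r)"

lemma lorders_trans: "r \<in> lorders \<Longrightarrow> trans r"
  by (simp add: lorders_def strict_linear_order_on_def)

lemma lorders_irrefl: "r \<in> lorders \<Longrightarrow> (x, x) \<notin> r"
  by (simp add: lorders_def strict_linear_order_on_def irrefl_def)

lemma lorders_total: "r \<in> lorders \<Longrightarrow> x \<noteq> y \<Longrightarrow> (x, y) \<in> r \<or> (y, x) \<in> r"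
  by (simp add: lorders_def strict_linear_order_on_def total_on_def)

lemma lorders_has_top:
  fixes r :: "'a::finite rel"
  assumes r: "r \<in> lorders" and "A \<noteq> {}"
  obtains x where "x \<in> A" "r \<in> Nset x A"
proof -
  have "wf r"
    using lorders_trans[OF r] lorders_irrefl[OF r]
    by (intro finite_acyclic_wf) (simp_all add: acyclic_irrefl irrefl_def)
  from \<open>A \<noteq> {}\<close> obtain a where "a \<in> A"
    by blast
  with \<open>wf r\<close> obtain x where "x \<in> A" "\<And>y. (y, x) \<in> r \<Longrightarrow> y \<notin> A"
    by (rule wfE_min) blast
  with r have "r \<in> Nset x A"
    unfolding Nset_def using lorders_total[OF r] by blast
  with \<open>x \<in> A\<close> show thesis ..
qed

lemma lorders_top_unique:
  assumes "x \<in> A" "x' \<in> A" "r \<in> Nset x A" "r \<in> Nset x' A"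
  shows "x = x'"
proof (rule ccontr)
  assume "x \<noteq> x'"
  with assms have "r \<in> lorders" "(x, x') \<in> r" "(x', x) \<in> r"
    unfolding Nset_def by auto
  then show False
    using lorders_trans lorders_irrefl by (metis transD)
qed

lemma sum_rum_eq_1:
  fixes \<nu> :: "'a::finite rel \<Rightarrow> real"
  assumes "is_dist \<nu>" and "A \<noteq> {}"
  shows "(\<Sum>x\<in>A. rum \<nu> x A) = 1"
proof -
  have "\<And>x. {r\<in>lorders. r \<in> Nset x A} = Nset x A"
    unfolding Nset_def by blast
  then have "(\<Sum>x\<in>A. rum \<nu> x A) = (\<Sum>x\<in>A. \<Sum>r\<in>{r\<in>lorders. r \<in> Nset x A}. \<nu> r)"
    unfolding rum_def by simp
  also have "\<dots> = (\<Sum>r\<in>lorders. \<Sum>x\<in>{x\<in>A. r \<in> Nset x A}. \<nu> r)"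
    by (rule sum.swap_restrict) simp_all
  also have "\<dots> = (\<Sum>r\<in>lorders. \<nu> r)"
  proof (rule sum.cong)
    fix r :: "'a rel" assume r: "r \<in> lorders"
    obtain x where "x \<in> A" "r \<in> Nset x A"
      using lorders_has_top[OF r \<open>A \<noteq> {}\<close>] .
    then have "{x\<in>A. r \<in> Nset x A} = {x}"
      by (auto intro: lorders_top_unique)
    then show "(\<Sum>x\<in>{x\<in>A. r \<in> Nset x A}. \<nu> r) = \<nu> r" by simp
  qed simp
  finally show ?thesis
    using assms(1) by (simp add: is_dist_def)
qed

lemma rum_eq_sum_upper_sets:
  fixes \<nu> :: "'a::finite rel \<Rightarrow> real"
  shows "rum \<nu> x A = (\<Sum>r\<in>lorders. if A \<subseteq> insert x {y. (x, y) \<in> r} then \<nu> r else 0)"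
proof -
  have "Nset x A = {r\<in>lorders. A \<subseteq> insert x {y. (x, y) \<in> r}}"
    unfolding Nset_def by blast
  then show ?thesis
    unfolding rum_def by (simp add: sum.inter_filter)
qed

lemma mobius_set_rum:
  fixes \<nu> :: "'a::finite rel \<Rightarrow> real"
  shows "mobius_set (rum \<nu> x) B = (\<Sum>r | r \<in> lorders \<and> insert x {y. (x, y) \<in> r} = B. \<nu> r)"
proof -
  let ?U = "\<lambda>r. insert x {y. (x, y) \<in> r}"
  have "mobius_set (rum \<nu> x) B = (\<Sum>r\<in>lorders. mobius_set (\<lambda>A. if A \<subseteq> ?U r then \<nu> r else 0) B)"
    unfolding rum_eq_sum_upper_sets by (rule mobius_set_sum)
  also have "\<dots> = (\<Sum>r\<in>lorders. if ?U r = B then \<nu> r else 0)"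
    by (simp add: mobius_set_indicator_subset eq_commute)
  also have "\<dots> = (\<Sum>r | r \<in> lorders \<and> ?U r = B. \<nu> r)"
    by (simp add: sum.inter_filter[symmetric])
  finally show ?thesis .
qed

lemma mobius_set_rum_nonneg: "is_dist \<nu> \<Longrightarrow> 0 \<le> mobius_set (rum \<nu> x) B"
  unfolding mobius_set_rum is_dist_def by (auto intro: sum_nonneg)

section \<open>Falmagne's theorem\<close>

lemma sum_permutations_of_set_Cons:
  assumes "finite A" "A \<noteq> {}"
  shows "(\<Sum>zs\<in>permutations_of_set A. h zs) = (\<Sum>z\<in>A. \<Sum>zs\<in>permutations_of_set (A - {z}). h (z # zs))"
proof -
  have "(\<Sum>zs\<in>permutations_of_set A. h zs) = (\<Sum>z\<in>A. \<Sum>zs\<in>(\<lambda>zs. z # zs) ` permutations_of_set (A - {z}). h zs)"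
    unfolding permutations_of_set_nonempty[OF assms(2)]
    by (rule sum.UNION_disjoint) (use assms(1) in auto)
  then show ?thesis
    by (simp add: sum.reindex)
qed

lemma sum_permutations_of_set_rev:
  "(\<Sum>zs\<in>permutations_of_set A. h (rev zs)) = (\<Sum>zs\<in>permutations_of_set A. h zs)"
proof -
  have "sum h (permutations_of_set A) = sum h (rev ` permutations_of_set A)"
    by simp
  also have "\<dots> = sum (h \<circ> rev) (permutations_of_set A)"
    by (rule sum.reindex) simp
  finally show ?thesis
    by (simp add: comp_def)
qed

lemma sum_permutations_of_set_snoc:
  assumes "finite A" "A \<noteq> {}"
  shows "(\<Sum>zs\<in>permutations_of_set A. h zs) = (\<Sum>z\<in>A. \<Sum>zs\<in>permutations_of_set (A - {z}). h (zs @ [z]))"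
proof -
  have "(\<Sum>zs\<in>permutations_of_set A. h zs) = (\<Sum>zs\<in>permutations_of_set A. h (rev zs))"
    by (rule sum_permutations_of_set_rev[symmetric])
  also have "\<dots> = (\<Sum>z\<in>A. \<Sum>zs\<in>permutations_of_set (A - {z}). h (rev zs @ [z]))"
    by (simp add: sum_permutations_of_set_Cons[OF assms])
  also have "\<dots> = (\<Sum>z\<in>A. \<Sum>zs\<in>permutations_of_set (A - {z}). h (zs @ [z]))"
    using sum_permutations_of_set_rev[where h = "\<lambda>zs. h (zs @ [_])"] by simp
  finally show ?thesis .
qed

definition ranked_above :: "'a \<Rightarrow> 'a list \<Rightarrow> 'a set" where
  "ranked_above x ys = set (takeWhile (\<lambda>z. z \<noteq> x) ys)"

lemma ranked_above_append_Cons: "x \<notin> set us \<Longrightarrow> ranked_above x (us @ x # vs) = set us"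
  unfolding ranked_above_def by (subst takeWhile_append2) auto

definition rank_order :: "'a list \<Rightarrow> 'a rel" where
  "rank_order ys = {(a, b). \<exists>i j. i < j \<and> j < length ys \<and> ys ! i = a \<and> ys ! j = b}"

lemma rank_order_in_lorders:
  assumes "ys \<in> permutations_of_set UNIV"
  shows "rank_order ys \<in> lorders"
proof -
  from assms have d: "distinct ys" and s: "set ys = UNIV"
    by (simp_all add: permutations_of_set_def)
  have "trans (rank_order ys)"
  proof (rule transI)
    fix a b c assume "(a, b) \<in> rank_order ys" "(b, c) \<in> rank_order ys"
    then obtain i j k l where "i < j" "j < length ys" "ys ! i = a" "ys ! j = b"
      and "k < l" "l < length ys" "ys ! k = b" "ys ! l = c"
      unfolding rank_order_def by blast
    moreover from this have "j = k"
      using d nth_eq_iff_index_eq by fastforce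
    ultimately have "i < l" "l < length ys" "ys ! i = a" "ys ! l = c"
      by simp_all
    then show "(a, c) \<in> rank_order ys"
      unfolding rank_order_def by blast
  qed
  moreover have "irrefl (rank_order ys)"
    unfolding irrefl_def rank_order_def using d nth_eq_iff_index_eq by fastforce
  moreover have "total (rank_order ys)"
  proof (unfold total_on_def, intro ballI impI)
    fix a b :: 'a assume "a \<noteq> b"
    obtain i j where ij: "i < length ys" "ys ! i = a" "j < length ys" "ys ! j = b"
      using s by (metis UNIV_I in_set_conv_nth)
    with \<open>a \<noteq> b\<close> have "i < j \<or> j < i"
      by (metis linorder_neqE_nat)
    with ij show "(a, b) \<in> rank_order ys \<or> (b, a) \<in> rank_order ys"
      unfolding rank_order_def by blast
  qed
  ultimately show ?thesis
    unfolding lorders_def strict_linear_order_on_def by simp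
qed

lemma rank_order_append_Cons_iff:
  assumes "distinct (us @ x # vs)"
  shows "(x, y) \<in> rank_order (us @ x # vs) \<longleftrightarrow> y \<in> set vs"
proof
  let ?ys = "us @ x # vs"
  assume "(x, y) \<in> rank_order ?ys"
  then obtain i j where ij: "i < j" "j < length ?ys" "?ys ! i = x" "?ys ! j = y"
    unfolding rank_order_def by blast
  have "i = length us"
    using nth_eq_iff_index_eq[OF assms, of i "length us"] ij by simp
  with ij obtain k where "j = Suc (length us + k)" "k < length vs" "vs ! k = y"
    by (auto simp: nth_append dest!: less_imp_Suc_add)
  then show "y \<in> set vs"
    by auto
next
  assume "y \<in> set vs"
  then obtain k where "k < length vs" "vs ! k = y"
    by (metis in_set_conv_nth)
  then show "(x, y) \<in> rank_order (us @ x # vs)"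
    unfolding rank_order_def
    by (intro CollectI case_prodI exI[of _ "length us"] exI[of _ "Suc (length us + k)"])
       (simp add: nth_append)
qed

lemma rank_order_in_Nset_iff:
  assumes "ys \<in> permutations_of_set UNIV"
  shows "rank_order ys \<in> Nset x A \<longleftrightarrow> A \<inter> ranked_above x ys = {}"
proof -
  from assms have d: "distinct ys" and s: "set ys = UNIV"
    by (simp_all add: permutations_of_set_def)
  obtain us vs where ys: "ys = us @ x # vs" "x \<notin> set us"
    using split_list_first[of x ys] s by auto
  with d s have "set us \<inter> set vs = {}" "x \<notin> set vs" "\<And>y. y \<in> set us \<or> y = x \<or> y \<in> set vs"
    by auto
  then have "(\<forall>y\<in>A - {x}. y \<in> set vs) \<longleftrightarrow> A \<inter> set us = {}"
    using ys(2) by blast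
  moreover have "(x, y) \<in> rank_order ys \<longleftrightarrow> y \<in> set vs" for y
    using rank_order_append_Cons_iff[of us x vs] d ys(1) by simp
  ultimately show ?thesis
    unfolding Nset_def using rank_order_in_lorders[OF assms] ys
    by (simp add: ranked_above_append_Cons)
qed

lemma inj_on_append_Cons:
  assumes "\<And>us vs. (us, vs) \<in> S \<Longrightarrow> x \<notin> set us \<and> x \<notin> set vs"
  shows "inj_on (\<lambda>(us, vs). us @ x # vs) S"
  using assms by (auto simp: inj_on_def append_Cons_eq_iff)

locale falmagne =
  fixes f :: "'a::finite \<Rightarrow> 'a set \<Rightarrow> real"
  assumes sum_eq_1: "\<And>A. A \<noteq> {} \<Longrightarrow> (\<Sum>x\<in>A. f x A) = 1"
    and mobius_set_nonneg: "\<And>x B. x \<in> B \<Longrightarrow> 0 \<le> mobius_set (f x) B"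
begin

definition q :: "'a \<Rightarrow> 'a set \<Rightarrow> real" where
  "q x B = mobius_set (f x) B"

definition qsum :: "'a set \<Rightarrow> real" where
  "qsum A = (if A = {} then 1 else (\<Sum>x\<in>A. q x A))"

lemma q_nonneg: "x \<in> B \<Longrightarrow> 0 \<le> q x B"
  unfolding q_def by (rule mobius_set_nonneg)

lemma qsum_nonneg: "0 \<le> qsum A"
  unfolding qsum_def using q_nonneg by (auto intro!: sum_nonneg)

lemma qsum_UNIV: "qsum UNIV = 1"
proof -
  have "{A. UNIV \<subseteq> A} = {UNIV}"
    by auto
  then have "q x UNIV = f x UNIV" for x
    unfolding q_def mobius_set_def \<open>{A. UNIV \<subseteq> A} = {UNIV}\<close> by simp
  then show ?thesis
    using sum_eq_1[of UNIV] by (simp add: qsum_def)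
qed

lemma q_le_qsum: "x \<in> B \<Longrightarrow> q x B \<le> qsum B"
  unfolding qsum_def using q_nonneg by (auto intro: member_le_sum)

lemma q_or_neg_q_insert:
  "(if x \<in> A then q x A else - q x (insert x A))
     = (\<Sum>C | A \<subseteq> C \<and> x \<in> C. (-1) ^ card (C - A) * f x C)"
proof (cases "x \<in> A")
  case True
  then have "{C. A \<subseteq> C \<and> x \<in> C} = {C. A \<subseteq> C}"
    by blast
  with True show ?thesis
    by (simp add: q_def mobius_set_def)
next
  case False
  have "- q x (insert x A)
      = (\<Sum>C | insert x A \<subseteq> C. - ((-1) ^ card (C - insert x A) * f x C))"
    by (simp add: q_def mobius_set_def sum_negf)
  also have "\<dots> = (\<Sum>C | insert x A \<subseteq> C. (-1) ^ card (C - A) * f x C)"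
  proof (intro sum.cong refl)
    fix C assume "C \<in> {C. insert x A \<subseteq> C}"
    with False have "C - A = insert x (C - insert x A)"
      by blast
    then show "- ((-1) ^ card (C - insert x A) * f x C) = (-1) ^ card (C - A) * f x C"
      by simp
  qed
  also have "{C. insert x A \<subseteq> C} = {C. A \<subseteq> C \<and> x \<in> C}"
    by blast
  finally show ?thesis
    using False by simp
qed

lemma sum_q_insert_eq_qsum:
  assumes "A \<noteq> UNIV"
  shows "(\<Sum>y\<in>-A. q y (insert y A)) = qsum A"
proof -
  let ?s = "\<lambda>C. (-1::real) ^ card (C - A)"
  have "(\<Sum>x\<in>A. q x A) - (\<Sum>y\<in>-A. q y (insert y A))
      = (\<Sum>x\<in>UNIV. if x \<in> A then q x A else - q x (insert x A))"
    by (simp add: sum.If_cases Compl_eq_Diff_UNIV sum_negf)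
  also have "\<dots> = (\<Sum>x\<in>UNIV. \<Sum>C\<in>{C\<in>{C. A \<subseteq> C}. x \<in> C}. ?s C * f x C)"
    unfolding q_or_neg_q_insert by (simp add: conj_commute)
  also have "\<dots> = (\<Sum>C | A \<subseteq> C. ?s C * (\<Sum>x\<in>C. f x C))"
    by (subst sum.swap_restrict) (simp_all add: sum_distrib_left)
  also have "\<dots> = (\<Sum>C | A \<subseteq> C. ?s C - (if C = {} then ?s C else 0))"
    by (intro sum.cong refl) (simp add: sum_eq_1)
  also have "\<dots> = (\<Sum>C | A \<subseteq> C. ?s C) - (\<Sum>C | A \<subseteq> C. if C = {} then ?s C else 0)"
    by (simp add: sum_subtractf)
  also have "(\<Sum>C | A \<subseteq> C. ?s C) = 0"
    using sum_interval_neg_one_power_card_diff_above[of UNIV A] assms by simp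
  also have "(\<Sum>C | A \<subseteq> C. if C = {} then ?s C else 0) = (if A = {} then 1 else 0)"
    by (subst sum.delta) simp_all
  finally show ?thesis
    unfolding qsum_def by (cases "A = {}") simp_all
qed

lemma q_le_qsum_Diff:
  assumes "z \<in> A"
  shows "q z A \<le> qsum (A - {z})"
proof -
  have "q z A = q z (insert z (A - {z}))"
    using assms by (simp add: insert_absorb)
  also have "\<dots> \<le> (\<Sum>y\<in>-(A - {z}). q y (insert y (A - {z})))"
    by (rule member_le_sum) (auto intro: q_nonneg)
  also have "\<dots> = qsum (A - {z})"
    by (rule sum_q_insert_eq_qsum) blast
  finally show ?thesis .
qed

fun chain_weight :: "'a set \<Rightarrow> 'a list \<Rightarrow> real" where
  "chain_weight A [] = 1"
| "chain_weight A (z # zs) = q z A / qsum A * chain_weight (A - {z}) zs"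

lemma chain_weight_append:
  "chain_weight A (us @ ws) = chain_weight A us * chain_weight (A - set us) ws"
proof (induction us arbitrary: A)
  case (Cons z us)
  have "A - {z} - set us = A - set (z # us)"
    by auto
  then show ?case
    using Cons[of "A - {z}"] by simp
qed simp

lemma chain_weight_snoc:
  "chain_weight A (us @ [y]) = chain_weight A us * (q y (A - set us) / qsum (A - set us))"
  by (simp add: chain_weight_append)

lemma chain_weight_nonneg: "distinct zs \<Longrightarrow> set zs \<subseteq> A \<Longrightarrow> 0 \<le> chain_weight A zs"
proof (induction zs arbitrary: A)
  case (Cons z zs)
  then have "0 \<le> chain_weight (A - {z}) zs"
    by (intro Cons.IH) auto
  with Cons.prems show ?case
    by (simp add: q_nonneg qsum_nonneg)
qed simp

lemma sum_chain_weight_permutations: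
  assumes "A = {} \<or> 0 < qsum A"
  shows "(\<Sum>zs\<in>permutations_of_set A. chain_weight A zs) = 1"
  using assms
proof (induction "card A" arbitrary: A rule: less_induct)
  case less
  show ?case
  proof (cases "A = {}")
    case False
    with less.prems have pos: "0 < qsum A"
      by simp
    have "(\<Sum>zs\<in>permutations_of_set (A - {z}). q z A / qsum A * chain_weight (A - {z}) zs)
        = q z A / qsum A" if z: "z \<in> A" for z
    proof (cases "q z A = 0")
      case False
      then have "A - {z} = {} \<or> 0 < qsum (A - {z})"
        using q_nonneg[OF z] q_le_qsum_Diff[OF z] by simp
      moreover have "card (A - {z}) < card A"
        by (rule card_Diff1_less[OF finite z])
      ultimately have "(\<Sum>zs\<in>permutations_of_set (A - {z}). chain_weight (A - {z}) zs) = 1"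
        using less.hyps by blast
      then show ?thesis
        by (subst sum_distrib_left[symmetric]) simp
    qed simp
    then have "(\<Sum>zs\<in>permutations_of_set A. chain_weight A zs) = (\<Sum>z\<in>A. q z A / qsum A)"
      by (simp add: sum_permutations_of_set_Cons[OF finite False])
    also have "\<dots> = 1"
      using pos False by (simp add: qsum_def flip: sum_divide_distrib)
    finally show ?thesis .
  qed simp
qed

lemma sum_chain_weight_prefixes:
  assumes "B \<noteq> {}"
  shows "(\<Sum>us\<in>permutations_of_set (-B). chain_weight UNIV us) = qsum B"
  using assms
proof (induction "card (-B)" arbitrary: B rule: less_induct)
  case less
  show ?case
  proof (cases "B = UNIV")
    case True
    then show ?thesis
      by (simp add: qsum_UNIV)
  next
    case False
    then have nonempty: "-B \<noteq> {}"
      by auto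
    have "(\<Sum>us\<in>permutations_of_set (- insert y B). chain_weight UNIV (us @ [y])) = q y (insert y B)"
      if y: "y \<in> -B" for y
    proof -
      have "(\<Sum>us\<in>permutations_of_set (- insert y B). chain_weight UNIV (us @ [y]))
          = (\<Sum>us\<in>permutations_of_set (- insert y B). chain_weight UNIV us) * (q y (insert y B) / qsum (insert y B))"
        by (subst sum_distrib_right, rule sum.cong)
           (auto simp: chain_weight_snoc permutations_of_set_def Compl_eq_Diff_UNIV[symmetric])
      also have "(\<Sum>us\<in>permutations_of_set (- insert y B). chain_weight UNIV us) = qsum (insert y B)"
        using y by (intro less.hyps psubset_card_mono) auto
      also have "qsum (insert y B) * (q y (insert y B) / qsum (insert y B)) = q y (insert y B)"
        using q_le_qsum[of y "insert y B"] q_nonneg[of y "insert y B"] by auto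
      finally show ?thesis .
    qed
    moreover have "- B - {y} = - insert y B" for y
      by blast
    ultimately have "(\<Sum>us\<in>permutations_of_set (-B). chain_weight UNIV us) = (\<Sum>y\<in>-B. q y (insert y B))"
      by (simp add: sum_permutations_of_set_snoc[OF finite nonempty])
    also have "\<dots> = qsum B"
      using False by (rule sum_q_insert_eq_qsum)
    finally show ?thesis .
  qed
qed

lemma rankings_with_upper_set:
  assumes "x \<in> B"
  shows "{ys \<in> permutations_of_set UNIV. - ranked_above x ys = B}
           = (\<lambda>(us, vs). us @ x # vs) ` (permutations_of_set (-B) \<times> permutations_of_set (B - {x}))"
proof (intro equalityI subsetI)
  fix ys assume "ys \<in> {ys \<in> permutations_of_set UNIV. - ranked_above x ys = B}"
  then have d: "distinct ys" "set ys = UNIV" and B: "- ranked_above x ys = B"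
    by (auto simp: permutations_of_set_def)
  obtain us vs where ys: "ys = us @ x # vs" "x \<notin> set us"
    using split_list_first[of x ys] d(2) by auto
  with B have "set us = -B"
    by (auto simp: ranked_above_append_Cons)
  with d ys have "us \<in> permutations_of_set (-B)" "vs \<in> permutations_of_set (B - {x})"
    by (auto simp: permutations_of_set_def)
  with ys show "ys \<in> (\<lambda>(us, vs). us @ x # vs) ` (permutations_of_set (-B) \<times> permutations_of_set (B - {x}))"
    by auto
next
  fix ys assume "ys \<in> (\<lambda>(us, vs). us @ x # vs) ` (permutations_of_set (-B) \<times> permutations_of_set (B - {x}))"
  then obtain us vs where ys: "ys = us @ x # vs"
    and "us \<in> permutations_of_set (-B)" "vs \<in> permutations_of_set (B - {x})"
    by auto
  then have "distinct us" "set us = -B" "distinct vs" "set vs = B - {x}"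
    by (simp_all add: permutations_of_set_def)
  with ys assms show "ys \<in> {ys \<in> permutations_of_set UNIV. - ranked_above x ys = B}"
    by (auto simp: permutations_of_set_def ranked_above_append_Cons)
qed

lemma sum_chain_weight_upper_set:
  assumes x: "x \<in> B"
  shows "(\<Sum>ys | ys \<in> permutations_of_set UNIV \<and> - ranked_above x ys = B. chain_weight UNIV ys) = q x B"
proof -
  let ?P = "permutations_of_set (-B) \<times> permutations_of_set (B - {x})"
  have inj: "inj_on (\<lambda>(us, vs). us @ x # vs) ?P"
    using x by (intro inj_on_append_Cons) (auto simp: permutations_of_set_def)
  have split: "chain_weight UNIV (us @ x # vs) = chain_weight UNIV us * (q x B / qsum B * chain_weight (B - {x}) vs)"
    if "us \<in> permutations_of_set (-B)" for us vs
  proof -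
    from that have "UNIV - set us = B"
      by (auto simp: permutations_of_set_def)
    then show ?thesis
      by (simp add: chain_weight_append)
  qed
  have "(\<Sum>ys | ys \<in> permutations_of_set UNIV \<and> - ranked_above x ys = B. chain_weight UNIV ys)
      = (\<Sum>(us, vs)\<in>?P. chain_weight UNIV (us @ x # vs))"
    unfolding rankings_with_upper_set[OF x] sum.reindex[OF inj] by (simp add: case_prod_unfold comp_def)
  also have "\<dots> = (\<Sum>us\<in>permutations_of_set (-B). chain_weight UNIV us) * (q x B / qsum B)
                    * (\<Sum>vs\<in>permutations_of_set (B - {x}). chain_weight (B - {x}) vs)"
    by (simp add: split sum.cartesian_product[symmetric] sum_product sum_distrib_left sum_divide_distrib mult_ac)
  also have "\<dots> = q x B"
  proof (cases "q x B = 0")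
    case False
    with q_nonneg[OF x] have "0 < q x B"
      by simp
    moreover from this have "B - {x} = {} \<or> 0 < qsum (B - {x})"
      using q_le_qsum_Diff[OF x] by simp
    moreover have "B \<noteq> {}"
      using x by blast
    ultimately show ?thesis
      using q_le_qsum[OF x] by (simp add: sum_chain_weight_permutations sum_chain_weight_prefixes)
  qed simp
  finally show ?thesis .
qed

lemma f_eq_sum_chain_weight:
  assumes x: "x \<in> A"
  shows "f x A = (\<Sum>ys | ys \<in> permutations_of_set UNIV \<and> A \<inter> ranked_above x ys = {}. chain_weight UNIV ys)"
proof -
  have "f x A = (\<Sum>B | A \<subseteq> B. q x B)"
    unfolding q_def by (rule mobius_set_inversion)
  also have "\<dots> = (\<Sum>B\<in>{B. A \<subseteq> B}. \<Sum>ys\<in>{ys \<in> permutations_of_set UNIV. - ranked_above x ys = B}. chain_weight UNIV ys)"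
    using x by (intro sum.cong refl) (auto simp flip: sum_chain_weight_upper_set)
  also have "\<dots> = (\<Sum>ys\<in>permutations_of_set UNIV. \<Sum>B\<in>{B \<in> {B. A \<subseteq> B}. - ranked_above x ys = B}. chain_weight UNIV ys)"
    by (rule sum.swap_restrict) simp_all
  also have "\<dots> = (\<Sum>ys\<in>permutations_of_set UNIV. if A \<inter> ranked_above x ys = {} then chain_weight UNIV ys else 0)"
  proof (intro sum.cong refl)
    fix ys
    have "{B \<in> {B. A \<subseteq> B}. - ranked_above x ys = B} = (if A \<inter> ranked_above x ys = {} then {- ranked_above x ys} else {})"
      by auto
    then show "(\<Sum>B\<in>{B \<in> {B. A \<subseteq> B}. - ranked_above x ys = B}. chain_weight UNIV ys)
        = (if A \<inter> ranked_above x ys = {} then chain_weight UNIV ys else 0)"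
      by simp
  qed
  also have "\<dots> = (\<Sum>ys | ys \<in> permutations_of_set UNIV \<and> A \<inter> ranked_above x ys = {}. chain_weight UNIV ys)"
    by (simp add: sum.inter_filter)
  finally show ?thesis .
qed

definition ranking_dist :: "'a rel \<Rightarrow> real" where
  "ranking_dist r = (\<Sum>ys | ys \<in> permutations_of_set UNIV \<and> rank_order ys = r. chain_weight UNIV ys)"

lemma is_dist_ranking_dist: "is_dist ranking_dist"
proof -
  have "rank_order ` permutations_of_set UNIV \<subseteq> lorders"
    using rank_order_in_lorders by blast
  then have "(\<Sum>r\<in>lorders. ranking_dist r) = (\<Sum>ys\<in>permutations_of_set UNIV. chain_weight UNIV ys)"
    unfolding ranking_dist_def by (intro sum.group) simp_all
  also have "\<dots> = 1"
    using qsum_UNIV by (intro sum_chain_weight_permutations) simp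
  finally show ?thesis
    unfolding is_dist_def ranking_dist_def
    by (auto simp: permutations_of_set_def intro!: sum_nonneg chain_weight_nonneg)
qed

lemma f_eq_rum_ranking_dist:
  assumes "x \<in> A"
  shows "f x A = rum ranking_dist x A"
proof -
  have "{ys \<in> {ys \<in> permutations_of_set UNIV. rank_order ys \<in> Nset x A}. rank_order ys = r}
      = {ys \<in> permutations_of_set UNIV. rank_order ys = r}" if "r \<in> Nset x A" for r
    using that by blast
  then have "rum ranking_dist x A
      = (\<Sum>r\<in>Nset x A. \<Sum>ys\<in>{ys \<in> {ys \<in> permutations_of_set UNIV. rank_order ys \<in> Nset x A}. rank_order ys = r}. chain_weight UNIV ys)"
    unfolding rum_def ranking_dist_def by simp
  also have "\<dots> = (\<Sum>ys | ys \<in> permutations_of_set UNIV \<and> rank_order ys \<in> Nset x A. chain_weight UNIV ys)"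
    by (rule sum.group) auto
  also have "{ys. ys \<in> permutations_of_set UNIV \<and> rank_order ys \<in> Nset x A}
      = {ys. ys \<in> permutations_of_set UNIV \<and> A \<inter> ranked_above x ys = {}}"
    by (auto simp: rank_order_in_Nset_iff)
  finally show ?thesis
    using f_eq_sum_chain_weight[OF assms] by simp
qed

end

theorem falmagne_rum_representation:
  fixes f :: "'a::finite \<Rightarrow> 'a set \<Rightarrow> real"
  assumes "\<And>A. A \<noteq> {} \<Longrightarrow> (\<Sum>x\<in>A. f x A) = 1"
    and "\<And>x B. x \<in> B \<Longrightarrow> 0 \<le> mobius_set (f x) B"
  shows "\<exists>\<nu>. is_dist \<nu> \<and> (\<forall>x A. x \<in> A \<longrightarrow> f x A = rum \<nu> x A)"
proof -
  interpret falmagne f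
    using assms by unfold_locales
  show ?thesis
    using is_dist_ranking_dist f_eq_rum_ranking_dist by blast
qed

section \<open>Moebius inversion on menu sequences\<close>

definition lists_in :: "nat \<Rightarrow> (nat \<Rightarrow> 'b set) \<Rightarrow> 'b list set" where
  "lists_in n S = {xs. length xs = n \<and> (\<forall>i<n. xs ! i \<in> S i)}"

lemma lists_in_0: "lists_in 0 S = {[]}"
  by (auto simp: lists_in_def)

lemma lists_in_Suc: "lists_in (Suc n) S = (\<lambda>(xs, a). xs @ [a]) ` (lists_in n S \<times> S n)"
proof (intro equalityI subsetI)
  fix ys assume ys: "ys \<in> lists_in (Suc n) S"
  then have "ys \<noteq> []"
    by (auto simp: lists_in_def)
  with ys have "butlast ys \<in> lists_in n S" "last ys \<in> S n"
    unfolding lists_in_def by (auto simp: nth_butlast last_conv_nth)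
  moreover have "ys = butlast ys @ [last ys]"
    using \<open>ys \<noteq> []\<close> by simp
  ultimately show "ys \<in> (\<lambda>(xs, a). xs @ [a]) ` (lists_in n S \<times> S n)"
    by (metis (no_types, lifting) SigmaI case_prod_conv image_eqI)
qed (auto simp: lists_in_def nth_append less_Suc_eq)

lemma finite_lists_in: "(\<And>i. i < n \<Longrightarrow> finite (S i)) \<Longrightarrow> finite (lists_in n S)"
  by (induction n) (simp_all add: lists_in_0 lists_in_Suc)

lemma sum_lists_in_prod:
  fixes f :: "nat \<Rightarrow> 'b \<Rightarrow> 'c::comm_semiring_1"
  assumes "\<And>i. i < n \<Longrightarrow> finite (S i)"
  shows "(\<Sum>xs\<in>lists_in n S. \<Prod>i<n. f i (xs ! i)) = (\<Prod>i<n. \<Sum>a\<in>S i. f i a)"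
  using assms
proof (induction n)
  case 0 then show ?case by (simp add: lists_in_0)
next
  case (Suc n)
  have inj: "inj_on (\<lambda>(xs, a). xs @ [a]) (lists_in n S \<times> S n)"
    by (auto simp: inj_on_def)
  have "(\<Sum>xs\<in>lists_in (Suc n) S. \<Prod>i<Suc n. f i (xs ! i))
      = (\<Sum>(xs, a)\<in>lists_in n S \<times> S n. (\<Prod>i<n. f i (xs ! i)) * f n a)"
    unfolding lists_in_Suc sum.reindex[OF inj]
    by (intro sum.cong refl) (auto simp: lists_in_def nth_append intro!: prod.cong)
  also have "\<dots> = (\<Sum>xs\<in>lists_in n S. \<Prod>i<n. f i (xs ! i)) * (\<Sum>a\<in>S n. f n a)"
    by (simp add: sum.cartesian_product[symmetric] sum_product)
  finally show ?case
    using Suc by simp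
qed

lemma supsets_eq_lists_in: "supsets Es = lists_in (length Es) (\<lambda>i. {A. Es ! i \<subseteq> A})"
  unfolding supsets_def lists_in_def by auto

lemma finite_supsets: "finite (supsets (Es :: 'a::finite set list))"
  unfolding supsets_eq_lists_in by (rule finite_lists_in) simp

lemma supsets_between_eq_lists_in:
  assumes "length Ds = length Es"
  shows "{Cs. Cs \<in> supsets Es \<and> Ds \<in> supsets Cs}
           = lists_in (length Es) (\<lambda>i. {C. Es ! i \<subseteq> C \<and> C \<subseteq> Ds ! i})"
proof (rule set_eqI)
  fix Cs
  show "Cs \<in> {Cs. Cs \<in> supsets Es \<and> Ds \<in> supsets Cs}
          \<longleftrightarrow> Cs \<in> lists_in (length Es) (\<lambda>i. {C. Es ! i \<subseteq> C \<and> C \<subseteq> Ds ! i})"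
    unfolding supsets_def lists_in_def mem_Collect_eq using assms by metis
qed

lemma sum_supsets_between_sign:
  fixes Es :: "'a::finite set list"
  assumes "Ds \<in> supsets Es"
  shows "(\<Sum>Cs | Cs \<in> supsets Es \<and> Ds \<in> supsets Cs.
            (-1::real) ^ (\<Sum>i<length Es. card (Ds ! i - Cs ! i))) = (if Ds = Es then 1 else 0)"
proof -
  let ?n = "length Es"
  have lD: "length Ds = ?n" and sub: "\<And>i. i < ?n \<Longrightarrow> Es ! i \<subseteq> Ds ! i"
    using assms by (simp_all add: supsets_def)
  have "(\<Sum>Cs | Cs \<in> supsets Es \<and> Ds \<in> supsets Cs. (-1::real) ^ (\<Sum>i<?n. card (Ds ! i - Cs ! i)))
      = (\<Prod>i<?n. \<Sum>C | Es ! i \<subseteq> C \<and> C \<subseteq> Ds ! i. (-1) ^ card (Ds ! i - C))"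
    unfolding supsets_between_eq_lists_in[OF lD] power_sum by (rule sum_lists_in_prod) simp
  also have "\<dots> = (\<Prod>i<?n. if Es ! i = Ds ! i then 1 else 0)"
    by (intro prod.cong refl) (simp add: sum_interval_neg_one_power_card_diff_below sub)
  also have "\<dots> = (if Ds = Es then 1 else 0)"
  proof (cases "Ds = Es")
    case False
    with lD obtain i where "i < ?n" "Es ! i \<noteq> Ds ! i"
      by (auto simp: list_eq_iff_nth_eq)
    with False show ?thesis
      by (intro trans[OF prod_zero]) auto
  qed simp
  finally show ?thesis .
qed

lemma mobius_inversion: "p xs Es = (\<Sum>Cs\<in>supsets Es. mobius p xs Cs)"
proof -
  let ?n = "length Es"
  let ?e = "\<lambda>Cs Ds. (-1::real) ^ (\<Sum>i<?n. card (Ds ! i - Cs ! i))"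
  have trans: "Ds \<in> supsets Es" if "Cs \<in> supsets Es" "Ds \<in> supsets Cs" for Cs Ds
    using that by (force simp: supsets_def)
  have "(\<Sum>Cs\<in>supsets Es. mobius p xs Cs)
      = (\<Sum>Cs\<in>supsets Es. \<Sum>Ds\<in>{Ds\<in>supsets Es. Ds \<in> supsets Cs}. ?e Cs Ds * p xs Ds)"
    unfolding mobius_def
    by (intro sum.cong refl arg_cong2[where f = sum]) (auto simp: supsets_def intro: trans)
  also have "\<dots> = (\<Sum>Ds\<in>supsets Es. \<Sum>Cs\<in>{Cs\<in>supsets Es. Ds \<in> supsets Cs}. ?e Cs Ds * p xs Ds)"
    by (rule sum.swap_restrict) (simp_all add: finite_supsets)
  also have "\<dots> = (\<Sum>Ds\<in>supsets Es. if Ds = Es then p xs Ds else 0)"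
    by (intro sum.cong refl) (simp add: sum_distrib_right[symmetric] sum_supsets_between_sign)
  also have "\<dots> = p xs Es"
    by (subst sum.delta[OF finite_supsets]) (simp add: supsets_def)
  finally show ?thesis ..
qed

section \<open>Marginal choice probabilities\<close>

lemma in_menus_length: "in_menus xs As \<Longrightarrow> length xs = length As"
  unfolding in_menus_def by (rule list_all2_lengthD)

lemma in_menus_append:
  "length xs = length As \<Longrightarrow> in_menus (xs @ ys) (As @ Bs) \<longleftrightarrow> in_menus xs As \<and> in_menus ys Bs"
  unfolding in_menus_def by (rule list_all2_append)

lemma in_menus_snoc: "in_menus xs As \<Longrightarrow> y \<in> B \<Longrightarrow> in_menus (xs @ [y]) (As @ [B])"
  unfolding in_menus_def by (simp add: list_all2_appendI)

lemma in_menus_replicate_UNIV: "length zs = k \<Longrightarrow> in_menus zs (replicate k UNIV)"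
  unfolding in_menus_def by (simp add: list_all2_conv_all_nth)

lemma menus_length: "As \<in> menus n \<Longrightarrow> length As = n"
  by (simp add: menus_def)

lemma menus_append: "As \<in> menus n \<Longrightarrow> Bs \<in> menus k \<Longrightarrow> As @ Bs \<in> menus (n + k)"
  unfolding menus_def by auto

lemma menus_snoc: "As \<in> menus n \<Longrightarrow> B \<noteq> {} \<Longrightarrow> As @ [B] \<in> menus (Suc n)"
  unfolding menus_def by auto

lemma menus_replicate_UNIV: "replicate k UNIV \<in> menus k"
  unfolding menus_def by simp

lemma sum_lists_length_Suc:
  "(\<Sum>zs | length zs = Suc k. h zs) = (\<Sum>y\<in>UNIV. \<Sum>zs | length zs = k. h (y # zs :: 'a::finite list))"
proof -
  have "{zs :: 'a list. length zs = Suc k} = (\<lambda>(y, zs). y # zs) ` (UNIV \<times> {zs. length zs = k})"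
    by (auto simp: length_Suc_conv)
  moreover have "inj_on (\<lambda>(y, zs). y # zs) (UNIV \<times> {zs :: 'a list. length zs = k})"
    by (auto simp: inj_on_def)
  ultimately show ?thesis
    by (simp add: sum.reindex sum.cartesian_product case_prod_unfold)
qed

lemma marg_eq_sum_extensions:
  "marg k p xs As = (\<Sum>zs | length zs = k. p (xs @ zs) (As @ replicate k UNIV))"
proof (induction k arbitrary: xs As)
  case (Suc k)
  have "marg (Suc k) p xs As
      = (\<Sum>y\<in>UNIV. \<Sum>zs | length zs = k. p (xs @ y # zs) (As @ replicate (Suc k) UNIV))"
    by (simp add: Suc.IH)
  then show ?case
    by (simp add: sum_lists_length_Suc)
qed simp

lemma pp_eq_sum_extensions:
  "pp T p xs As = (\<Sum>zs | length zs = T - length xs. p (xs @ zs) (As @ replicate (T - length xs) UNIV))"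
  unfolding pp_def by (rule marg_eq_sum_extensions)

lemma pp_full: "length xs = T \<Longrightarrow> pp T p xs As = p xs As"
  by (simp add: pp_def)

lemma pp_eq_sum_snoc_UNIV:
  assumes "length xs < T"
  shows "pp T p xs As = (\<Sum>y\<in>UNIV. pp T p (xs @ [y]) (As @ [UNIV]))"
proof -
  have "T - length xs = Suc (T - length (xs @ [y]))" for y
    using assms by simp
  then show ?thesis
    unfolding pp_def by simp
qed

lemma pp_nonneg:
  assumes "rjcr T p" "As \<in> menus n" "n \<le> T" "in_menus xs As"
  shows "0 \<le> pp T p xs As"
proof -
  have lx: "length xs = n"
    using assms(2,4) by (simp add: in_menus_length menus_length)
  show ?thesis
    unfolding pp_eq_sum_extensions
  proof (rule sum_nonneg)
    fix zs :: "'a list" assume "zs \<in> {zs. length zs = T - length xs}"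
    have "As @ replicate (T - length xs) UNIV \<in> menus T"
      using menus_append[OF assms(2) menus_replicate_UNIV, of "T - n"] assms(3) lx by simp
    moreover from \<open>zs \<in> _\<close> have "xs @ zs \<in> sels (As @ replicate (T - length xs) UNIV)"
      using assms(2,4) lx by (simp add: sels_def in_menus_append in_menus_replicate_UNIV menus_length)
    ultimately show "0 \<le> p (xs @ zs) (As @ replicate (T - length xs) UNIV)"
      using assms(1) unfolding rjcr_def by blast
  qed
qed

lemma sels_Cons_replicate_UNIV:
  "sels (A # replicate k UNIV) = (\<lambda>(x, zs). x # zs) ` (A \<times> {zs. length zs = k})"
proof (intro equalityI subsetI)
  fix ws assume "ws \<in> sels (A # replicate k UNIV)"
  then obtain x zs where "ws = x # zs" "x \<in> A" "list_all2 (\<in>) zs (replicate k UNIV)"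
    unfolding sels_def in_menus_def by (auto simp: list_all2_Cons2)
  moreover from this have "length zs = k"
    by (auto dest: list_all2_lengthD)
  ultimately show "ws \<in> (\<lambda>(x, zs). x # zs) ` (A \<times> {zs. length zs = k})"
    by (intro image_eqI[of _ _ "(x, zs)"]) auto
next
  fix ws assume "ws \<in> (\<lambda>(x, zs). x # zs) ` (A \<times> {zs. length zs = k})"
  then show "ws \<in> sels (A # replicate k UNIV)"
    using in_menus_replicate_UNIV unfolding sels_def in_menus_def by auto
qed

lemma sum_pp_first_period:
  assumes "rjcr T p" "1 \<le> T" "A \<noteq> {}"
  shows "(\<Sum>x\<in>A. pp T p [x] [A]) = 1"
proof -
  let ?As = "A # replicate (T - 1) UNIV"
  note sels_Cons_replicate_UNIV[of A "T - 1"]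
  moreover have "inj_on (\<lambda>(x, zs). x # zs) (A \<times> {zs :: 'a list. length zs = T - 1})"
    by (auto simp: inj_on_def)
  ultimately have "(\<Sum>x\<in>A. pp T p [x] [A]) = (\<Sum>xs\<in>sels ?As. p xs ?As)"
    by (simp add: pp_eq_sum_extensions sum.reindex sum.cartesian_product case_prod_unfold)
  also have "\<dots> = 1"
    using assms unfolding rjcr_def menus_def by auto
  finally show ?thesis .
qed

lemma marginality_sum_eq_pp:
  assumes "marginality T p" "n \<in> {1..T-1}" "As \<in> menus n" "in_menus xs As" "B \<noteq> {}"
  shows "(\<Sum>y\<in>B. pp T p (xs @ [y]) (As @ [B])) = pp T p xs As"
proof -
  have "(\<Sum>y\<in>B. pp T p (xs @ [y]) (As @ [B])) = (\<Sum>y\<in>UNIV. pp T p (xs @ [y]) (As @ [UNIV]))"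
    using assms unfolding marginality_def sels_def by blast
  also have "\<dots> = pp T p xs As"
    using assms(2-4) by (intro pp_eq_sum_snoc_UNIV[symmetric]) (auto simp: in_menus_length menus_length)
  finally show ?thesis .
qed

lemma supsets_list_update:
  assumes "k < length Es" "Es ! k \<subseteq> B"
  shows "supsets (Es[k := B]) = {Cs \<in> supsets Es. B \<subseteq> Cs ! k}"
proof -
  have "(\<forall>i<length Es. Es[k := B] ! i \<subseteq> Cs ! i) \<longleftrightarrow> (\<forall>i<length Es. Es ! i \<subseteq> Cs ! i) \<and> B \<subseteq> Cs ! k" for Cs
    using assms by (auto simp: nth_list_update)
  then show ?thesis
    unfolding supsets_def by auto
qed

lemma in_menus_supsets:
  assumes "in_menus w Es" "Cs \<in> supsets Es"
  shows "in_menus w Cs"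
proof -
  have "length w = length Es" "\<And>i. i < length Es \<Longrightarrow> w ! i \<in> Es ! i"
    using assms(1) by (simp_all add: in_menus_def list_all2_conv_all_nth)
  moreover have "length Cs = length Es" "\<And>i. i < length Es \<Longrightarrow> Es ! i \<subseteq> Cs ! i"
    using assms(2) by (simp_all add: supsets_def)
  ultimately show ?thesis
    unfolding in_menus_def list_all2_conv_all_nth by auto
qed

lemma supsets_in_menus:
  assumes "in_menus w Es" "Cs \<in> supsets Es"
  shows "Cs \<in> menus (length Es)"
proof -
  have "A \<noteq> {}" if "A \<in> set Cs" for A
    using in_menus_supsets[OF assms] that
    unfolding in_menus_def list_all2_conv_all_nth in_set_conv_nth by auto
  with assms(2) show ?thesis
    by (simp add: menus_def supsets_def)
qed

lemma mobius_set_coordinate_nonneg: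
  fixes p :: "'a::finite list \<Rightarrow> 'a set list \<Rightarrow> real"
  assumes cm: "complete_monotonicity T p" and w: "in_menus w Es" and "length Es = T" "k < T"
  shows "0 \<le> mobius_set (\<lambda>B. p w (Es[k := B])) (Es ! k)"
proof -
  let ?s = "\<lambda>B. (-1::real) ^ card (B - Es ! k)"
  have "mobius_set (\<lambda>B. p w (Es[k := B])) (Es ! k)
      = (\<Sum>B | Es ! k \<subseteq> B. \<Sum>Cs\<in>{Cs \<in> supsets Es. B \<subseteq> Cs ! k}. ?s B * mobius p w Cs)"
    unfolding mobius_set_def
    by (intro sum.cong refl) (simp add: mobius_inversion[of p w "Es[k := _]"] supsets_list_update assms sum_distrib_left)
  also have "\<dots> = (\<Sum>Cs\<in>supsets Es. \<Sum>B\<in>{B \<in> {B. Es ! k \<subseteq> B}. B \<subseteq> Cs ! k}. ?s B * mobius p w Cs)"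
    by (rule sum.swap_restrict) (simp_all add: finite_supsets)
  also have "\<dots> \<ge> 0"
  proof (rule sum_nonneg)
    fix Cs assume Cs: "Cs \<in> supsets Es"
    then have "Es ! k \<subseteq> Cs ! k"
      using assms(3,4) by (simp add: supsets_def)
    then have "0 \<le> (\<Sum>B | Es ! k \<subseteq> B \<and> B \<subseteq> Cs ! k. ?s B)"
      by (simp add: sum_interval_neg_one_power_card_diff_above)
    moreover have "0 \<le> mobius p w Cs"
      using cm supsets_in_menus[OF w Cs] in_menus_supsets[OF w Cs] assms(3)
      unfolding complete_monotonicity_def sels_def by blast
    ultimately show "0 \<le> (\<Sum>B\<in>{B \<in> {B. Es ! k \<subseteq> B}. B \<subseteq> Cs ! k}. ?s B * mobius p w Cs)"
      by (simp add: sum_distrib_right[symmetric])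
  qed
  finally show ?thesis .
qed

lemma mobius_set_pp_nonneg:
  fixes p :: "'a::finite list \<Rightarrow> 'a set list \<Rightarrow> real"
  assumes cm: "complete_monotonicity T p" and "As \<in> menus n" "n < T" "in_menus xs As" "y \<in> B"
  shows "0 \<le> mobius_set (\<lambda>B'. pp T p (xs @ [y]) (As @ [B'])) B"
proof -
  define R where "R = replicate (T - Suc n) (UNIV :: 'a set)"
  have lx: "length xs = n" and lA: "length As = n"
    using assms(2,4) by (simp_all add: in_menus_length menus_length)
  have "pp T p (xs @ [y]) (As @ [B']) = (\<Sum>zs | length zs = T - Suc n. p (xs @ y # zs) ((As @ B # R)[n := B']))" for B'
    by (simp add: pp_eq_sum_extensions lx lA R_def list_update_append)
  then have "mobius_set (\<lambda>B'. pp T p (xs @ [y]) (As @ [B'])) B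
      = mobius_set (\<lambda>B'. \<Sum>zs | length zs = T - Suc n. p (xs @ y # zs) ((As @ B # R)[n := B'])) B"
    by simp
  also have "\<dots> = (\<Sum>zs | length zs = T - Suc n. mobius_set (\<lambda>B'. p (xs @ y # zs) ((As @ B # R)[n := B'])) B)"
    by (rule mobius_set_sum)
  also have "\<dots> \<ge> 0"
  proof (rule sum_nonneg)
    fix zs :: "'a list" assume "zs \<in> {zs. length zs = T - Suc n}"
    then have "in_menus (y # zs) (B # R)"
      using assms(5) in_menus_replicate_UNIV[of zs] by (simp add: R_def in_menus_def)
    then have "in_menus (xs @ y # zs) (As @ B # R)"
      using assms(4) lx lA by (simp add: in_menus_append)
    moreover have "length (As @ B # R) = T" "(As @ B # R) ! n = B"
      using lA assms(3) by (simp_all add: R_def nth_append)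
    ultimately show "0 \<le> mobius_set (\<lambda>B'. p (xs @ y # zs) ((As @ B # R)[n := B'])) B"
      using mobius_set_coordinate_nonneg[OF cm, of "xs @ y # zs" "As @ B # R" n] assms(3) by simp
  qed
  finally show ?thesis .
qed

section \<open>Sequential random utility models\<close>

definition stage_dist :: "('a rel \<Rightarrow> real) \<Rightarrow> (nat \<Rightarrow> 'a list \<Rightarrow> 'a rel \<Rightarrow> real) \<Rightarrow> nat \<Rightarrow> 'a list \<Rightarrow> 'a rel \<Rightarrow> real" where
  "stage_dist \<nu> t i ys = (if i = 0 then \<nu> else t i ys)"

definition seq_rum :: "('a rel \<Rightarrow> real) \<Rightarrow> (nat \<Rightarrow> 'a list \<Rightarrow> 'a rel \<Rightarrow> real) \<Rightarrow> 'a list \<Rightarrow> 'a set list \<Rightarrow> real" where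
  "seq_rum \<nu> t xs As = (\<Prod>i<length xs. rum (stage_dist \<nu> t i (take i xs)) (xs ! i) (As ! i))"

lemma seq_rum_snoc:
  assumes "length As = length xs"
  shows "seq_rum \<nu> t (xs @ [y]) (As @ [B]) = seq_rum \<nu> t xs As * rum (stage_dist \<nu> t (length xs) xs) y B"
proof -
  have "seq_rum \<nu> t (xs @ [y]) (As @ [B])
      = (\<Prod>i<length xs. rum (stage_dist \<nu> t i (take i (xs @ [y]))) ((xs @ [y]) ! i) ((As @ [B]) ! i))
        * rum (stage_dist \<nu> t (length xs) xs) y B"
    unfolding seq_rum_def using assms by (simp add: nth_append)
  also have "(\<Prod>i<length xs. rum (stage_dist \<nu> t i (take i (xs @ [y]))) ((xs @ [y]) ! i) ((As @ [B]) ! i))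
      = seq_rum \<nu> t xs As"
    unfolding seq_rum_def using assms by (intro prod.cong) (simp_all add: nth_append)
  finally show ?thesis .
qed

lemma sum_Nset_lists_eq_seq_rum:
  fixes \<nu> :: "'a::finite rel \<Rightarrow> real"
  assumes "1 \<le> T" "length xs = T"
  shows "(\<Sum>rs\<in>{rs. length rs = T \<and> (\<forall>i<T. rs ! i \<in> Nset (xs ! i) (As ! i))}.
            \<nu> (rs ! 0) * (\<Prod>i\<in>{1..<T}. t i (take i xs) (rs ! i))) = seq_rum \<nu> t xs As"
proof -
  have "(\<Prod>i<T. stage_dist \<nu> t i (take i xs) (rs ! i)) = \<nu> (rs ! 0) * (\<Prod>i\<in>{1..<T}. t i (take i xs) (rs ! i))" for rs
  proof -
    have "{..<T} = insert 0 {1..<T}"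
      using assms(1) by auto
    then have "(\<Prod>i<T. stage_dist \<nu> t i (take i xs) (rs ! i))
        = \<nu> (rs ! 0) * (\<Prod>i\<in>{1..<T}. stage_dist \<nu> t i (take i xs) (rs ! i))"
      by (simp add: stage_dist_def)
    also have "(\<Prod>i\<in>{1..<T}. stage_dist \<nu> t i (take i xs) (rs ! i)) = (\<Prod>i\<in>{1..<T}. t i (take i xs) (rs ! i))"
      by (rule prod.cong) (simp_all add: stage_dist_def)
    finally show ?thesis .
  qed
  moreover have "{rs. length rs = T \<and> (\<forall>i<T. rs ! i \<in> Nset (xs ! i) (As ! i))} = lists_in T (\<lambda>i. Nset (xs ! i) (As ! i))"
    unfolding lists_in_def ..
  ultimately have "(\<Sum>rs\<in>{rs. length rs = T \<and> (\<forall>i<T. rs ! i \<in> Nset (xs ! i) (As ! i))}.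
            \<nu> (rs ! 0) * (\<Prod>i\<in>{1..<T}. t i (take i xs) (rs ! i)))
      = (\<Sum>rs\<in>lists_in T (\<lambda>i. Nset (xs ! i) (As ! i)). \<Prod>i<T. stage_dist \<nu> t i (take i xs) (rs ! i))"
    by simp
  also have "\<dots> = (\<Prod>i<T. \<Sum>r\<in>Nset (xs ! i) (As ! i). stage_dist \<nu> t i (take i xs) r)"
    by (rule sum_lists_in_prod) simp
  also have "\<dots> = seq_rum \<nu> t xs As"
    unfolding seq_rum_def rum_def assms(2) ..
  finally show ?thesis .
qed

locale seq_rum_model =
  fixes T :: nat and p :: "'a::finite list \<Rightarrow> 'a set list \<Rightarrow> real"
    and \<nu> :: "'a rel \<Rightarrow> real" and t :: "nat \<Rightarrow> 'a list \<Rightarrow> 'a rel \<Rightarrow> real"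
  assumes is_dist_init: "is_dist \<nu>"
    and is_dist_trans: "\<And>n xs. n \<in> {1..T-1} \<Longrightarrow> length xs = n \<Longrightarrow> is_dist (t n xs)"
    and p_eq_seq_rum: "\<And>As xs. As \<in> menus T \<Longrightarrow> in_menus xs As \<Longrightarrow> p xs As = seq_rum \<nu> t xs As"

lemma sicdru_iff_seq_rum_model:
  fixes p :: "'a::finite list \<Rightarrow> 'a set list \<Rightarrow> real"
  assumes "1 \<le> T"
  shows "sicdru T p \<longleftrightarrow> (\<exists>\<nu> t. seq_rum_model T p \<nu> t)"
proof -
  have sum_eq: "(\<Sum>rs\<in>{rs. length rs = T \<and> (\<forall>i<T. rs ! i \<in> Nset (xs ! i) (As ! i))}.
                   \<nu> (rs ! 0) * (\<Prod>i\<in>{1..<T}. t i (take i xs) (rs ! i))) = seq_rum \<nu> t xs As"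
    if "xs \<in> sels As" "As \<in> menus T" for \<nu> t As and xs :: "'a list"
    using sum_Nset_lists_eq_seq_rum[OF assms, of xs] that by (simp add: sels_def in_menus_length menus_length)
  show ?thesis
  proof
    assume "sicdru T p"
    then obtain \<nu> t where "is_dist \<nu>" "\<forall>n\<in>{1..T-1}. \<forall>xs. length xs = n \<longrightarrow> is_dist (t n xs)"
      and "\<forall>As\<in>menus T. \<forall>xs\<in>sels As. p xs As = seq_rum \<nu> t xs As"
      unfolding sicdru_def using sum_eq by auto
    then have "seq_rum_model T p \<nu> t"
      by unfold_locales (auto simp: sels_def)
    then show "\<exists>\<nu> t. seq_rum_model T p \<nu> t"
      by blast
  next
    assume "\<exists>\<nu> t. seq_rum_model T p \<nu> t"
    then obtain \<nu> t where "seq_rum_model T p \<nu> t"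
      by blast
    then interpret seq_rum_model T p \<nu> t .
    show "sicdru T p"
      unfolding sicdru_def using is_dist_init is_dist_trans p_eq_seq_rum sum_eq
      by (intro exI[of _ \<nu>] exI[of _ t]) (auto simp: sels_def)
  qed
qed

context seq_rum_model
begin

lemma is_dist_stage_dist: "n < T \<Longrightarrow> length ys = n \<Longrightarrow> is_dist (stage_dist \<nu> t n ys)"
  using is_dist_init is_dist_trans by (simp add: stage_dist_def)

lemma marg_eq_seq_rum:
  "length xs + k = T \<Longrightarrow> As \<in> menus (length xs) \<Longrightarrow> in_menus xs As \<Longrightarrow> marg k p xs As = seq_rum \<nu> t xs As"
proof (induction k arbitrary: xs As)
  case 0
  then show ?case
    using p_eq_seq_rum by simp
next
  case (Suc k)
  have "marg (Suc k) p xs As = (\<Sum>y\<in>UNIV. seq_rum \<nu> t (xs @ [y]) (As @ [UNIV]))"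
    using Suc by (simp add: menus_snoc in_menus_snoc)
  also have "\<dots> = seq_rum \<nu> t xs As * (\<Sum>y\<in>UNIV. rum (stage_dist \<nu> t (length xs) xs) y UNIV)"
    using Suc.prems(2) by (simp add: seq_rum_snoc menus_length sum_distrib_left)
  also have "(\<Sum>y\<in>UNIV. rum (stage_dist \<nu> t (length xs) xs) y UNIV) = 1"
    using Suc.prems(1) by (intro sum_rum_eq_1 is_dist_stage_dist) simp_all
  finally show ?case
    by simp
qed

lemma pp_eq_seq_rum: "As \<in> menus n \<Longrightarrow> n \<le> T \<Longrightarrow> in_menus xs As \<Longrightarrow> pp T p xs As = seq_rum \<nu> t xs As"
  unfolding pp_def by (rule marg_eq_seq_rum) (simp_all add: in_menus_length menus_length)

lemma pp_snoc_eq: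
  assumes "n \<in> {1..T-1}" "As \<in> menus n" "in_menus xs As" "y \<in> B"
  shows "pp T p (xs @ [y]) (As @ [B]) = pp T p xs As * rum (stage_dist \<nu> t n xs) y B"
proof -
  have lx: "length xs = n" and lA: "length As = n"
    using assms(2,3) by (simp_all add: in_menus_length menus_length)
  have "As @ [B] \<in> menus (Suc n)"
    using assms(2,4) by (auto intro: menus_snoc)
  then have "pp T p (xs @ [y]) (As @ [B]) = seq_rum \<nu> t (xs @ [y]) (As @ [B])"
    using assms(1,3,4) by (intro pp_eq_seq_rum in_menus_snoc) auto
  also have "\<dots> = seq_rum \<nu> t xs As * rum (stage_dist \<nu> t n xs) y B"
    using lx lA by (simp add: seq_rum_snoc)
  also have "seq_rum \<nu> t xs As = pp T p xs As"
    using assms(1-3) by (intro pp_eq_seq_rum[symmetric]) auto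
  finally show ?thesis .
qed

lemma marginality: "marginality T p"
  unfolding marginality_def
proof (intro ballI allI impI)
  fix n :: nat and As :: "'a set list" and xs :: "'a list" and B C :: "'a set"
  assume n: "n \<in> {1..T-1}" and As: "As \<in> menus n" and "xs \<in> sels As" "B \<noteq> {}" "C \<noteq> {}"
  then have xs: "in_menus xs As" and lx: "length xs = n"
    by (simp_all add: sels_def in_menus_length menus_length)
  have "is_dist (stage_dist \<nu> t n xs)"
    using n lx by (intro is_dist_stage_dist) auto
  then have "(\<Sum>y\<in>D. pp T p (xs @ [y]) (As @ [D])) = pp T p xs As" if "D \<noteq> {}" for D
    using that by (simp add: pp_snoc_eq[OF n As xs] sum_rum_eq_1 flip: sum_distrib_left)
  then show "(\<Sum>y\<in>B. pp T p (xs @ [y]) (As @ [B])) = (\<Sum>y\<in>C. pp T p (xs @ [y]) (As @ [C]))"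
    using \<open>B \<noteq> {}\<close> \<open>C \<noteq> {}\<close> by simp
qed

lemma choice_set_independence: "choice_set_independence T p"
  unfolding choice_set_independence_def
proof (intro ballI allI impI)
  fix n :: nat and B :: "'a set" and y :: 'a and As As' :: "'a set list" and xs :: "'a list"
  assume "n \<in> {1..T-1}" "y \<in> B" "As \<in> menus n" "As' \<in> menus n" "in_menus xs As" "in_menus xs As'"
    and "0 < pp T p xs As" "0 < pp T p xs As'"
  then show "pp T p (xs @ [y]) (As @ [B]) / pp T p xs As = pp T p (xs @ [y]) (As' @ [B]) / pp T p xs As'"
    by (simp add: pp_snoc_eq)
qed

lemma complete_monotonicity: "complete_monotonicity T p"
  unfolding complete_monotonicity_def
proof (intro ballI)
  fix Bs :: "'a set list" and xs :: "'a list" assume Bs: "Bs \<in> menus T" and "xs \<in> sels Bs"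
  then have xs: "in_menus xs Bs" and lx: "length xs = T" and lB: "length Bs = T"
    by (simp_all add: sels_def in_menus_length menus_length)
  let ?g = "\<lambda>i. rum (stage_dist \<nu> t i (take i xs)) (xs ! i)"
  have "mobius p xs Bs = (\<Sum>As\<in>supsets Bs. (-1) ^ (\<Sum>i<T. card (As ! i - Bs ! i)) * seq_rum \<nu> t xs As)"
    unfolding mobius_def lB
    using p_eq_seq_rum supsets_in_menus[OF xs] in_menus_supsets[OF xs] lB by (intro sum.cong) auto
  also have "\<dots> = (\<Sum>As\<in>lists_in T (\<lambda>i. {A. Bs ! i \<subseteq> A}). \<Prod>i<T. (-1) ^ card (As ! i - Bs ! i) * ?g i (As ! i))"
    unfolding supsets_eq_lists_in lB seq_rum_def lx by (simp add: power_sum prod.distrib)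
  also have "\<dots> = (\<Prod>i<T. mobius_set (?g i) (Bs ! i))"
    unfolding mobius_set_def by (rule sum_lists_in_prod) simp
  also have "\<dots> \<ge> 0"
    using lx by (intro prod_nonneg mobius_set_rum_nonneg is_dist_stage_dist) simp_all
  finally show "0 \<le> mobius p xs Bs" .
qed

end

section \<open>Sufficiency\<close>

locale rjcr_axioms =
  fixes T :: nat and p :: "'a::finite list \<Rightarrow> 'a set list \<Rightarrow> real"
  assumes T_ge_1: "1 \<le> T"
    and rjcr: "rjcr T p"
    and marginal: "marginality T p"
    and completely_monotone: "complete_monotonicity T p"
    and csi: "choice_set_independence T p"
begin

definition positive_history :: "'a list \<Rightarrow> 'a set list \<Rightarrow> bool" where
  "positive_history ys Bs \<longleftrightarrow> Bs \<in> menus (length ys) \<and> in_menus ys Bs \<and> 0 < pp T p ys Bs"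

definition history_menus :: "'a list \<Rightarrow> 'a set list" where
  "history_menus ys = (SOME Bs. positive_history ys Bs)"

definition cond_choice :: "'a list \<Rightarrow> 'a \<Rightarrow> 'a set \<Rightarrow> real" where
  "cond_choice ys y B = pp T p (ys @ [y]) (history_menus ys @ [B]) / pp T p ys (history_menus ys)"

lemma positive_history_menus: "positive_history ys Bs \<Longrightarrow> positive_history ys (history_menus ys)"
  unfolding history_menus_def by (rule someI)

lemma cond_choice_rum:
  assumes "1 \<le> length ys" "length ys < T" "positive_history ys Bs"
  shows "\<exists>d. is_dist d \<and> (\<forall>y B. y \<in> B \<longrightarrow> cond_choice ys y B = rum d y B)"
proof (rule falmagne_rum_representation)
  let ?C = "history_menus ys"
  have C: "?C \<in> menus (length ys)" "in_menus ys ?C" "0 < pp T p ys ?C"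
    using positive_history_menus[OF assms(3)] by (simp_all add: positive_history_def)
  have n: "length ys \<in> {1..T-1}"
    using assms(1,2) by simp
  fix B :: "'a set" assume "B \<noteq> {}"
  then show "(\<Sum>y\<in>B. cond_choice ys y B) = 1"
    using marginality_sum_eq_pp[OF marginal n C(1,2)] C(3)
    by (simp add: cond_choice_def flip: sum_divide_distrib)
next
  let ?C = "history_menus ys"
  have C: "?C \<in> menus (length ys)" "in_menus ys ?C" "0 < pp T p ys ?C"
    using positive_history_menus[OF assms(3)] by (simp_all add: positive_history_def)
  fix y :: 'a and B assume "y \<in> B"
  then show "0 \<le> mobius_set (cond_choice ys y) B"
    unfolding cond_choice_def mobius_set_divide
    using mobius_set_pp_nonneg[OF completely_monotone C(1) assms(2) C(2)] C(3) by simp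
qed

lemma first_period_rum: "\<exists>\<nu>. is_dist \<nu> \<and> (\<forall>x A. x \<in> A \<longrightarrow> pp T p [x] [A] = rum \<nu> x A)"
proof (rule falmagne_rum_representation)
  show "(\<Sum>x\<in>A. pp T p [x] [A]) = 1" if "A \<noteq> {}" for A
    using sum_pp_first_period[OF rjcr T_ge_1 that] .
  show "0 \<le> mobius_set (\<lambda>A. pp T p [x] [A]) B" if "x \<in> B" for x B
    using mobius_set_pp_nonneg[OF completely_monotone _ _ _ that, of "[]" 0 "[]"] T_ge_1
    by (simp add: menus_def in_menus_def)
qed

definition init_dist :: "'a rel \<Rightarrow> real" where
  "init_dist = (SOME \<nu>. is_dist \<nu> \<and> (\<forall>x A. x \<in> A \<longrightarrow> pp T p [x] [A] = rum \<nu> x A))"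

(* Histories of probability zero do not matter; there init_dist is an arbitrary choice. *)
definition trans_dist :: "nat \<Rightarrow> 'a list \<Rightarrow> 'a rel \<Rightarrow> real" where
  "trans_dist n ys =
     (if (\<exists>Bs. positive_history ys Bs) \<and> 1 \<le> length ys \<and> length ys < T
      then SOME d. is_dist d \<and> (\<forall>y B. y \<in> B \<longrightarrow> cond_choice ys y B = rum d y B)
      else init_dist)"

lemma init_dist: "is_dist init_dist" "x \<in> A \<Longrightarrow> pp T p [x] [A] = rum init_dist x A"
  using someI_ex[OF first_period_rum] unfolding init_dist_def by blast+

lemma trans_dist:
  assumes "1 \<le> length ys" "length ys < T" "positive_history ys Bs"
  shows "is_dist (trans_dist n ys)" "y \<in> B \<Longrightarrow> cond_choice ys y B = rum (trans_dist n ys) y B"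
  using someI_ex[OF cond_choice_rum[OF assms]] assms unfolding trans_dist_def by auto

lemma is_dist_trans_dist: "is_dist (trans_dist n ys)"
proof (cases "(\<exists>Bs. positive_history ys Bs) \<and> 1 \<le> length ys \<and> length ys < T")
  case True
  then show ?thesis
    using trans_dist(1) by blast
next
  case False
  then have "trans_dist n ys = init_dist"
    unfolding trans_dist_def by (rule if_not_P)
  then show ?thesis
    using init_dist(1) by simp
qed

lemma pp_snoc_eq_0:
  assumes "n \<in> {1..T-1}" "Bs \<in> menus n" "in_menus ys Bs" "y \<in> B" "pp T p ys Bs = 0"
  shows "pp T p (ys @ [y]) (Bs @ [B]) = 0"
proof -
  have "B \<noteq> {}"
    using assms(4) by blast
  have "(\<Sum>z\<in>B. pp T p (ys @ [z]) (Bs @ [B])) = 0"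
    using marginality_sum_eq_pp[OF marginal assms(1-3) \<open>B \<noteq> {}\<close>] assms(5) by simp
  moreover have "\<forall>z\<in>B. 0 \<le> pp T p (ys @ [z]) (Bs @ [B])"
    using assms(1-3) \<open>B \<noteq> {}\<close>
    by (auto intro!: pp_nonneg[OF rjcr, of _ "Suc n"] menus_snoc in_menus_snoc)
  ultimately show ?thesis
    using assms(4) by (simp add: sum_nonneg_eq_0_iff)
qed

lemma pp_snoc_eq_cond_choice:
  assumes "length ys \<in> {1..T-1}" "positive_history ys Bs" "y \<in> B"
  shows "pp T p (ys @ [y]) (Bs @ [B]) = pp T p ys Bs * cond_choice ys y B"
proof -
  have Bs: "Bs \<in> menus (length ys)" "in_menus ys Bs" "0 < pp T p ys Bs"
    using assms(2) by (simp_all add: positive_history_def)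
  have C: "history_menus ys \<in> menus (length ys)" "in_menus ys (history_menus ys)"
    "0 < pp T p ys (history_menus ys)"
    using positive_history_menus[OF assms(2)] by (simp_all add: positive_history_def)
  have "B \<noteq> {}"
    using assms(3) by blast
  then have "pp T p (ys @ [y]) (Bs @ [B]) / pp T p ys Bs = cond_choice ys y B"
    unfolding cond_choice_def
    by (rule csi[unfolded choice_set_independence_def, rule_format, OF assms(1) _ assms(3) Bs(1) C(1) Bs(2) C(2) Bs(3) C(3)])
  with Bs(3) show ?thesis
    by (simp add: field_simps)
qed

lemma pp_snoc_eq_trans_dist:
  assumes n: "n \<in> {1..T-1}" and Bs: "Bs \<in> menus n" "in_menus ys Bs" and "y \<in> B"
  shows "pp T p (ys @ [y]) (Bs @ [B]) = pp T p ys Bs * rum (trans_dist n ys) y B"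
proof (cases "0 < pp T p ys Bs")
  case True
  then have "positive_history ys Bs"
    using Bs by (simp add: positive_history_def in_menus_length menus_length)
  moreover have "1 \<le> length ys" "length ys < T"
    using n Bs by (auto simp: in_menus_length menus_length)
  moreover have "length ys = n"
    using Bs by (simp add: in_menus_length menus_length)
  ultimately show ?thesis
    using pp_snoc_eq_cond_choice n trans_dist(2) \<open>y \<in> B\<close> by simp
next
  case False
  then have "pp T p ys Bs = 0"
    using pp_nonneg[OF rjcr Bs(1) _ Bs(2)] n by fastforce
  then show ?thesis
    using pp_snoc_eq_0[OF n Bs \<open>y \<in> B\<close>] by simp
qed

lemma pp_eq_seq_rum:
  "As \<in> menus n \<Longrightarrow> in_menus xs As \<Longrightarrow> 1 \<le> n \<Longrightarrow> n \<le> T \<Longrightarrow> pp T p xs As = seq_rum init_dist trans_dist xs As"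
proof (induction n arbitrary: xs As)
  case (Suc n)
  have "length xs = Suc n" "length As = Suc n"
    using Suc.prems(1,2) by (simp_all add: in_menus_length menus_length)
  then obtain ys y Bs B where xs: "xs = ys @ [y]" and As: "As = Bs @ [B]"
    by (metis length_Suc_conv_rev)
  moreover from this have lys: "length ys = n" and lBs: "length Bs = n"
    using \<open>length xs = Suc n\<close> \<open>length As = Suc n\<close> by simp_all
  ultimately have "in_menus ys Bs" "in_menus [y] [B]" "Bs \<in> menus n"
    using Suc.prems(1,2) by (simp_all add: in_menus_append menus_def)
  then have "y \<in> B"
    by (simp add: in_menus_def)
  show ?case
  proof (cases "n = 0")
    case True
    then show ?thesis
      using xs As lys lBs \<open>y \<in> B\<close> init_dist(2)
      by (simp add: seq_rum_def stage_dist_def)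
  next
    case False
    then have n: "n \<in> {1..T-1}"
      using Suc.prems(4) by simp
    have "pp T p xs As = pp T p ys Bs * rum (trans_dist n ys) y B"
      unfolding xs As by (rule pp_snoc_eq_trans_dist[OF n \<open>Bs \<in> menus n\<close> \<open>in_menus ys Bs\<close> \<open>y \<in> B\<close>])
    also have "pp T p ys Bs = seq_rum init_dist trans_dist ys Bs"
      using Suc.IH \<open>Bs \<in> menus n\<close> \<open>in_menus ys Bs\<close> False Suc.prems(4) by simp
    also have "seq_rum init_dist trans_dist ys Bs * rum (trans_dist n ys) y B = seq_rum init_dist trans_dist xs As"
      using xs As lys lBs False by (simp add: seq_rum_snoc stage_dist_def)
    finally show ?thesis .
  qed
qed simp

lemma seq_rum_model: "seq_rum_model T p init_dist trans_dist"
proof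
  show "is_dist init_dist" "\<And>n xs. is_dist (trans_dist n xs)"
    by (simp_all add: init_dist is_dist_trans_dist)
  show "p xs As = seq_rum init_dist trans_dist xs As" if "As \<in> menus T" "in_menus xs As" for As xs
    using pp_eq_seq_rum[OF that T_ge_1] that by (simp add: pp_full in_menus_length menus_length)
qed

end

theorem theorem13:
  fixes p :: "'a::finite list \<Rightarrow> 'a set list \<Rightarrow> real" and T :: nat
  assumes "T \<ge> 1" and "rjcr T p"
  shows "sicdru T p \<longleftrightarrow>
           marginality T p \<and> complete_monotonicity T p \<and> choice_set_independence T p"
proof
  assume "sicdru T p"
  then obtain \<nu> t where "seq_rum_model T p \<nu> t"
    using sicdru_iff_seq_rum_model[OF assms(1)] by blast
  then show "marginality T p \<and> complete_monotonicity T p \<and> choice_set_independence T p"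
    using seq_rum_model.marginality seq_rum_model.complete_monotonicity
      seq_rum_model.choice_set_independence by blast
next
  assume "marginality T p \<and> complete_monotonicity T p \<and> choice_set_independence T p"
  with assms interpret rjcr_axioms T p
    by unfold_locales simp_all
  show "sicdru T p"
    using sicdru_iff_seq_rum_model[OF assms(1)] seq_rum_model by blast
qed

end
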